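(* Let $a\in\mathbb{Q}\setminus\{-1,0,1\}$, $z\in\mathbb{C}$ with $|z|\le1$, and $\xi<x$ positive real numbers. Then \begin{multline*} \sum_{\substack{p\le x \\ \nu_p(a)=0}} z^{\omega(p-1) - \omega(\mathrm{ord}_p(a))} = \sum_{\ell\mid Q_\xi} (z-1)^{\omega(\ell)}\sum_{m\mid \ell}\mu(m)\, \#\bigl\{ p\le x : \nu_p(a)=0,\ \ell\mid (p-1)/\mathrm{ord}_p(a),\ m\ell\mid (p-1)\bigr\}\\ + O\biggl( \sum_{\xi<q^k\le x} \#\bigl\{ p\le x : \nu_p(a)=0,\ q^k \mid (p-1)/\mathrm{ord}_p(a),\ q^k\,\|\, (p-1) \bigr\} \biggr), \end{multline*} with an absolute implied constant, where the error sum is over prime powers $q^k$ ($k\ge1$) in $(\xi,x]$.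
   Context: $p,q$ denote primes. $\nu_p(a)$ is the $p$-adic valuation of $a$; $\mathrm{ord}_p(a)$ is the multiplicative order of $a$ mod $p$; $\omega(n)$ is the number of distinct prime factors; $\mu$ is the Möbius function; $q^k\| n$ means $q^k\mid n$ and $q^{k+1}\nmid n$. For $\xi>0$, $Q_\xi$ is the least common multiple of all positive integers $\le\xi$. The convention $0^0=1$ is used. *)

theory Defs
  imports "HOL-Analysis.Analysis" "HOL-Number_Theory.Number_Theory" "HOL-Computational_Algebra.Squarefree"
begin

definition rat_vp :: "nat \<Rightarrow> rat \<Rightarrow> int" where
  "rat_vp p a = (case quotient_of a of (n, d) \<Rightarrow>
      int (multiplicity (int p) n) - int (multiplicity (int p) d))"

text \<open>Multiplicative order of a = n/d modulo p (for p not dividing n d):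
  least k > 0 with (n/d)^k = 1 mod p, i.e. n^k = d^k mod p.\<close>
definition rat_ord :: "nat \<Rightarrow> rat \<Rightarrow> nat" where
  "rat_ord p a = (case quotient_of a of (n, d) \<Rightarrow>
      (LEAST k. 0 < k \<and> [n ^ k = d ^ k] (mod int p)))"

definition omega :: "nat \<Rightarrow> nat" where
  "omega n = card (prime_factors n)"

definition moebius :: "nat \<Rightarrow> int" where
  "moebius n = (if n = 0 then 0 else if squarefree n then (-1) ^ card (prime_factors n) else 0)"

definition Qxi :: "real \<Rightarrow> nat" where
  "Qxi \<xi> = Lcm {1..nat \<lfloor>\<xi>\<rfloor>}"

end

theory Submission
  imports Defs
begin

(*
  Fix a prime p with \<nu>\<^sub>p(a) = 0 and put N = p - 1 and d = ord\<^sub>p(a), a divisor of N.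
  The inner Moebius sum over m is the indicator that l is a unitary divisor of N
  (l | N and gcd(l, N/l) = 1), and the unitary divisors of N are exactly the products of full
  prime powers q^\<nu>\<^sub>q(N) over sets of primes dividing N. So, after exchanging the sums, p
  contributes the sum of (z - 1)^|S| over all S \<subseteq> T', i.e. z^|T'|, to the main term, where T'
  is the set of primes whose full power in N divides both N/d and Q\<^sub>\<xi>.
  On the other side \<omega>(N) - \<omega>(d) = |T| for the set T \<supseteq> T' of primes whose full power in N
  divides N/d. If T' \<noteq> T, a prime q \<in> T - T' gives q^k \<parallel> N with q^k | N/d and q^k not
  dividing Q\<^sub>\<xi>, hence \<xi> < q^k \<le> x. As |z| \<le> 1, the discrepancy |z^|T| - z^|T'|| is at
  most 2, and charging it to (q, k) gives the error term with constant 2.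
*)

lemma sum_Pow_power_card:
  fixes w :: "'a::comm_semiring_1"
  assumes "finite A"
  shows "(\<Sum>S\<in>Pow A. w ^ card S) = (w + 1) ^ card A"
  using prod_add[OF assms, of "\<lambda>_. w" "\<lambda>_. 1"] by simp

lemma prime_factors_prod_prime_powers:
  fixes e :: "'a::factorial_semiring_multiplicative \<Rightarrow> nat"
  assumes "finite S" "\<And>q. q \<in> S \<Longrightarrow> prime q" "\<And>q. q \<in> S \<Longrightarrow> 0 < e q"
  shows "prime_factors (\<Prod>q\<in>S. q ^ e q) = S"
  using assms multiplicity_prod_prime_powers[OF assms(1,2)]
  by (auto simp: prime_factors_multiplicity split: if_splits)

lemma inj_on_prod_prime_powers:
  fixes e :: "'a::factorial_semiring_multiplicative \<Rightarrow> nat"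
  assumes "finite A" "\<And>q. q \<in> A \<Longrightarrow> prime q" "\<And>q. q \<in> A \<Longrightarrow> 0 < e q"
  shows "inj_on (\<lambda>S. \<Prod>q\<in>S. q ^ e q) (Pow A)"
proof (rule inj_onI)
  fix S T assume "S \<in> Pow A" "T \<in> Pow A" and eq: "(\<Prod>q\<in>S. q ^ e q) = (\<Prod>q\<in>T. q ^ e q)"
  then have "finite S" "finite T" "S \<subseteq> A" "T \<subseteq> A"
    using assms(1) finite_subset by auto
  then show "S = T"
    using eq prime_factors_prod_prime_powers[of S e] prime_factors_prod_prime_powers[of T e] assms
    by (metis subsetD)
qed

lemma prod_prime_powers_dvd_iff:
  fixes e :: "nat \<Rightarrow> nat"
  assumes "finite S" "\<And>q. q \<in> S \<Longrightarrow> prime q" "M \<noteq> 0"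
  shows "(\<Prod>q\<in>S. q ^ e q) dvd M \<longleftrightarrow> (\<forall>q\<in>S. q ^ e q dvd M)"
proof
  assume "(\<Prod>q\<in>S. q ^ e q) dvd M"
  then show "\<forall>q\<in>S. q ^ e q dvd M"
    using assms(1) by (meson dvd_prodI dvd_trans)
next
  assume dvd: "\<forall>q\<in>S. q ^ e q dvd M"
  have "(\<Prod>q\<in>S. q ^ e q) \<noteq> 0"
    using assms(1,2) by (metis not_prime_0 power_eq_0_iff prod_zero_iff)
  then show "(\<Prod>q\<in>S. q ^ e q) dvd M"
  proof (rule multiplicity_le_imp_dvd)
    fix r :: nat assume r: "prime r"
    have "r \<in> S \<Longrightarrow> e r \<le> multiplicity r M"
      using dvd assms(3) r by (intro multiplicity_geI) (auto simp: prime_gt_1_nat)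
    then show "multiplicity r (\<Prod>q\<in>S. q ^ e q) \<le> multiplicity r M"
      using multiplicity_prod_prime_powers[OF assms(1,2) r] by simp
  qed
qed

lemma squarefree_divisors_eq_image:
  fixes n :: nat
  assumes "n > 0"
  shows "{d. d dvd n \<and> squarefree d} = (\<lambda>S. \<Prod>S) ` Pow (prime_factors n)"
proof
  show "(\<lambda>S. \<Prod>S) ` Pow (prime_factors n) \<subseteq> {d. d dvd n \<and> squarefree d}"
  proof clarify
    fix S assume S: "S \<subseteq> prime_factors n"
    then have primes: "finite S" "\<And>q. q \<in> S \<Longrightarrow> prime q" using finite_subset by auto
    then have "(\<Prod>q\<in>S. q ^ 1) dvd n"
      using S assms by (subst prod_prime_powers_dvd_iff) auto
    moreover have "squarefree (\<Prod>S)"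
      using primes(2) by (intro squarefree_prod_coprime) (auto intro: primes_coprime squarefree_prime)
    ultimately show "\<Prod>S dvd n \<and> squarefree (\<Prod>S)" by simp
  qed
  show "{d. d dvd n \<and> squarefree d} \<subseteq> (\<lambda>S. \<Prod>S) ` Pow (prime_factors n)"
  proof clarify
    fix d assume d: "d dvd n" "squarefree d"
    then have "d \<noteq> 0" using assms by auto
    then have "d = (\<Prod>q\<in>prime_factors d. q ^ multiplicity q d)"
      by (simp add: prod_prime_factors)
    also have "\<dots> = \<Prod>(prime_factors d)"
      using d(2) squarefree_factorial_semiring'[OF \<open>d \<noteq> 0\<close>] by simp
    finally have d_eq: "d = \<Prod>(prime_factors d)" .
    have "prime_factors d \<subseteq> prime_factors n"
      using d(1) assms by (intro dvd_prime_factors) auto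
    then show "d \<in> (\<lambda>S. \<Prod>S) ` Pow (prime_factors n)"
      by (rule image_eqI[where f = "\<lambda>S. \<Prod>S", OF d_eq PowI])
  qed
qed

lemma sum_moebius_divisors:
  assumes "n > 0"
  shows "(\<Sum>d\<in>{d. d dvd n}. moebius d) = of_bool (n = 1)"
proof -
  let ?A = "prime_factors n"
  have primes: "\<And>q. q \<in> ?A \<Longrightarrow> prime q" by auto
  have moebius_prod: "moebius (\<Prod>S) = (-1) ^ card S" if "S \<subseteq> ?A" for S
  proof -
    have "\<Prod>S \<in> {d. d dvd n \<and> squarefree d}"
      unfolding squarefree_divisors_eq_image[OF assms] using that by (intro imageI) simp
    moreover have "prime_factors (\<Prod>q\<in>S. q ^ 1) = S"
      using that finite_subset by (intro prime_factors_prod_prime_powers) auto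
    ultimately show ?thesis
      using assms by (auto simp: moebius_def)
  qed
  have "(\<Sum>d\<in>{d. d dvd n}. moebius d) = (\<Sum>d\<in>{d. d dvd n \<and> squarefree d}. moebius d)"
    using assms by (intro sum.mono_neutral_right) (auto simp: moebius_def)
  also have "\<dots> = (\<Sum>S\<in>Pow ?A. moebius (\<Prod>S))"
    using inj_on_prod_prime_powers[of ?A "\<lambda>_. 1"] primes
    by (simp add: squarefree_divisors_eq_image[OF assms] sum.reindex)
  also have "\<dots> = (\<Sum>S\<in>Pow ?A. (-1) ^ card S)"
    using moebius_prod by (intro sum.cong) auto
  also have "\<dots> = 0 ^ card ?A"
    using sum_Pow_power_card[of ?A "-1 :: int"] by simp
  also have "\<dots> = of_bool (n = 1)"
  proof -
    have "?A = {} \<longleftrightarrow> n = 1"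
      using assms by (auto simp: prime_factorization_empty_iff)
    then show ?thesis by (auto simp: card_gt_0_iff)
  qed
  finally show ?thesis .
qed

lemma sum_moebius_mult_dvd_eq_coprime:
  fixes l N :: nat
  assumes "N > 0" "l dvd N"
  shows "(\<Sum>m\<in>{m. m dvd l}. of_int (moebius m) * of_bool (m * l dvd N)) =
    (of_bool (coprime l (N div l)) :: 'a::ring_1)"
proof -
  have "l > 0" using assms by (auto intro: Nat.gr0I)
  then have dvd_iff: "m * l dvd N \<longleftrightarrow> m dvd N div l" for m
    using assms(2) by (auto simp: dvd_div_iff_mult)
  have "(\<Sum>m\<in>{m. m dvd l}. moebius m * of_bool (m * l dvd N))
      = (\<Sum>m\<in>{m. m dvd l} \<inter> {m. m dvd N div l}. moebius m)"
    using \<open>l > 0\<close> by (simp add: sum.inter_restrict dvd_iff)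
  also have "{m. m dvd l} \<inter> {m. m dvd N div l} = {m. m dvd gcd l (N div l)}"
    by auto
  also have "(\<Sum>m\<in>{m. m dvd gcd l (N div l)}. moebius m) = of_bool (coprime l (N div l))"
    using sum_moebius_divisors[of "gcd l (N div l)"] \<open>l > 0\<close>
    unfolding coprime_iff_gcd_eq_1 by simp
  finally show ?thesis
    by (metis (mono_tags, lifting) of_int_of_bool of_int_mult of_int_sum sum.cong)
qed

lemma unitary_divisors_eq_image:
  fixes N :: nat
  assumes "N > 0"
  shows "{l. l dvd N \<and> coprime l (N div l)} =
    (\<lambda>S. \<Prod>q\<in>S. q ^ multiplicity q N) ` Pow (prime_factors N)"
proof
  let ?h = "\<lambda>S. \<Prod>q\<in>S. q ^ multiplicity q N"
  show "?h ` Pow (prime_factors N) \<subseteq> {l. l dvd N \<and> coprime l (N div l)}"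
  proof clarify
    fix S assume S: "S \<subseteq> prime_factors N"
    have "N = ?h (prime_factors N)"
      using assms by (simp add: prod_prime_factors)
    also have "\<dots> = ?h S * ?h (prime_factors N - S)"
      using prod.subset_diff[OF S] by (simp add: mult.commute)
    finally have N_eq: "N = ?h S * ?h (prime_factors N - S)" .
    then have "?h S \<noteq> 0" using assms by (metis mult_eq_0_iff not_less0)
    then have "N div ?h S = ?h (prime_factors N - S)"
      by (subst N_eq) simp
    moreover have "coprime (q ^ a) (r ^ b)" if "q \<in> S" "r \<in> prime_factors N - S" for q r a b
    proof -
      have "prime q" "prime r" "q \<noteq> r" using that S by auto
      then show ?thesis by (simp add: primes_coprime)
    qed
    then have "coprime (?h S) (?h (prime_factors N - S))"
      by (intro prod_coprime_left prod_coprime_right)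
    ultimately show "?h S dvd N \<and> coprime (?h S) (N div ?h S)"
      using N_eq by (metis dvd_triv_left)
  qed
  show "{l. l dvd N \<and> coprime l (N div l)} \<subseteq> ?h ` Pow (prime_factors N)"
  proof clarify
    fix l assume l: "l dvd N" "coprime l (N div l)"
    then have N_eq: "N = l * (N div l)" by simp
    then have "l \<noteq> 0" "N div l \<noteq> 0" using assms by (metis mult_eq_0_iff not_less0)+
    have multiplicity_eq: "multiplicity q l = multiplicity q N" if "q \<in> prime_factors l" for q
    proof -
      have q: "prime q" "q dvd l" using that by auto
      then have "\<not> q dvd N div l"
        using l(2) by (meson coprime_common_divisor not_prime_unit)
      then have "multiplicity q (N div l) = 0" by (rule not_dvd_imp_multiplicity_0)
      moreover have "multiplicity q N = multiplicity q l + multiplicity q (N div l)"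
        using q(1) \<open>l \<noteq> 0\<close> \<open>N div l \<noteq> 0\<close>
        by (subst N_eq) (simp add: prime_elem_multiplicity_mult_distrib)
      ultimately show ?thesis by simp
    qed
    have "?h (prime_factors l) = (\<Prod>q\<in>prime_factors l. q ^ multiplicity q l)"
      using multiplicity_eq by simp
    also have "\<dots> = l"
      using \<open>l \<noteq> 0\<close> by (simp add: prod_prime_factors)
    finally have l_eq: "l = ?h (prime_factors l)" ..
    have "prime_factors l \<subseteq> prime_factors N"
      using l(1) assms by (intro dvd_prime_factors) auto
    then show "l \<in> ?h ` Pow (prime_factors N)"
      by (rule image_eqI[where f = ?h, OF l_eq PowI])
  qed
qed

lemma unitary_divisors_dvd_eq_image:
  fixes N D Q :: nat
  assumes "N > 0" "D dvd N" "Q > 0"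
  shows "{l. l dvd Q \<and> l dvd N div D \<and> coprime l (N div l)} =
    (\<lambda>S. \<Prod>q\<in>S. q ^ multiplicity q N) ` Pow {q \<in> prime_factors N.
      q ^ multiplicity q N dvd N div D \<and> q ^ multiplicity q N dvd Q}"
proof -
  let ?h = "\<lambda>S. \<Prod>q\<in>S. q ^ multiplicity q N"
  have "N div D \<noteq> 0" using assms by (auto elim!: dvdE)
  have "l dvd N" if "l dvd N div D" for l
    using dvd_mult2[OF that, of D] assms(2) by simp
  then have "{l. l dvd Q \<and> l dvd N div D \<and> coprime l (N div l)} =
      {l \<in> ?h ` Pow (prime_factors N). l dvd Q \<and> l dvd N div D}"
    using unitary_divisors_eq_image[OF assms(1)] by blast
  also have "\<dots> = ?h ` {S \<in> Pow (prime_factors N). ?h S dvd Q \<and> ?h S dvd N div D}"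
    by blast
  also have "{S \<in> Pow (prime_factors N). ?h S dvd Q \<and> ?h S dvd N div D} =
      Pow {q \<in> prime_factors N. q ^ multiplicity q N dvd N div D \<and> q ^ multiplicity q N dvd Q}"
  proof -
    have "?h S dvd M \<longleftrightarrow> (\<forall>q\<in>S. q ^ multiplicity q N dvd M)"
      if "S \<subseteq> prime_factors N" "M \<noteq> 0" for S M
      using that by (intro prod_prime_powers_dvd_iff) (auto intro: finite_subset)
    then show ?thesis
      using assms(3) \<open>N div D \<noteq> 0\<close> by auto
  qed
  finally show ?thesis .
qed

lemma sum_divisors_moebius_eq_power_card:
  fixes N D Q :: nat and w :: "'a::comm_ring_1"
  assumes "N > 0" "D dvd N" "Q > 0"
  shows "(\<Sum>l\<in>{l. l dvd Q}. w ^ omega l *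
            (\<Sum>m\<in>{m. m dvd l}. of_int (moebius m) * of_bool (l dvd N div D \<and> m * l dvd N)))
       = (w + 1) ^ card {q \<in> prime_factors N.
            q ^ multiplicity q N dvd N div D \<and> q ^ multiplicity q N dvd Q}"
    (is "?lhs = (w + 1) ^ card ?T")
proof -
  let ?h = "\<lambda>S. \<Prod>q\<in>S. q ^ multiplicity q N"
  have inner: "(\<Sum>m\<in>{m. m dvd l}. of_int (moebius m) * of_bool (l dvd N div D \<and> m * l dvd N))
      = (of_bool (l dvd N div D \<and> coprime l (N div l)) :: 'a)" for l
  proof (cases "l dvd N div D")
    case True
    then have "l dvd N" using dvd_mult2[OF True, of D] assms(2) by simp
    then show ?thesis using True sum_moebius_mult_dvd_eq_coprime[OF assms(1) \<open>l dvd N\<close>] by simp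
  qed simp
  have "finite ?T" by simp
  have T_primes: "prime q \<and> 0 < multiplicity q N" if "q \<in> ?T" for q
    using that assms(1) by (auto simp: in_prime_factors_iff prime_multiplicity_gt_zero_iff)
  have "?lhs = (\<Sum>l\<in>{l. l dvd Q \<and> l dvd N div D \<and> coprime l (N div l)}. w ^ omega l)"
    using assms(3) by (simp add: inner sum.inter_restrict Collect_conj_eq)
  also have "\<dots> = (\<Sum>S\<in>Pow ?T. w ^ omega (?h S))"
    using inj_on_prod_prime_powers[OF \<open>finite ?T\<close>] T_primes
    by (simp add: unitary_divisors_dvd_eq_image[OF assms] sum.reindex)
  also have "\<dots> = (\<Sum>S\<in>Pow ?T. w ^ card S)"
  proof (rule sum.cong)
    fix S assume "S \<in> Pow ?T"
    then have "prime_factors (?h S) = S"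
      using T_primes finite_subset[OF _ \<open>finite ?T\<close>] by (intro prime_factors_prod_prime_powers) auto
    then show "w ^ omega (?h S) = w ^ card S" by (simp add: omega_def)
  qed simp
  also have "\<dots> = (w + 1) ^ card ?T"
    using \<open>finite ?T\<close> by (rule sum_Pow_power_card)
  finally show ?thesis .
qed

lemma prime_power_multiplicity_dvd_div_iff:
  fixes N D q :: nat
  assumes "N > 0" "D dvd N" "prime q"
  shows "q ^ multiplicity q N dvd N div D \<longleftrightarrow> \<not> q dvd D"
proof -
  have N_eq: "N = D * (N div D)" using assms(2) by simp
  then have "D \<noteq> 0" "N div D \<noteq> 0" using assms(1) by (metis mult_eq_0_iff not_less0)+
  then have "multiplicity q N = multiplicity q D + multiplicity q (N div D)"
    using assms(3) by (subst N_eq) (simp add: prime_elem_multiplicity_mult_distrib)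
  moreover have "q ^ multiplicity q N dvd N div D \<longleftrightarrow> multiplicity q N \<le> multiplicity q (N div D)"
    using \<open>N div D \<noteq> 0\<close> assms(3) by (intro power_dvd_iff_le_multiplicity) auto
  moreover have "multiplicity q D = 0 \<longleftrightarrow> \<not> q dvd D"
    using \<open>D \<noteq> 0\<close> assms(3) by (intro multiplicity_eq_zero_iff) auto
  ultimately show ?thesis by linarith
qed

lemma omega_diff_eq_card:
  fixes N D :: nat
  assumes "N > 0" "D dvd N"
  shows "omega N - omega D = card {q \<in> prime_factors N. q ^ multiplicity q N dvd N div D}"
proof -
  have "prime_factors D \<subseteq> prime_factors N"
    using assms by (intro dvd_prime_factors) auto
  moreover have "prime_factors N - prime_factors D =
      {q \<in> prime_factors N. q ^ multiplicity q N dvd N div D}"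
    using assms prime_power_multiplicity_dvd_div_iff by (auto simp: in_prime_factors_iff)
  ultimately show ?thesis
    unfolding omega_def by (metis card_Diff_subset finite_set_mset)
qed

lemma norm_power_diff_le_2:
  fixes z :: "'a::real_normed_div_algebra"
  assumes "norm z \<le> 1"
  shows "norm (z ^ m - z ^ n) \<le> 2"
proof -
  have "norm (z ^ m - z ^ n) \<le> norm (z ^ m) + norm (z ^ n)" by (rule norm_triangle_ineq4)
  also have "\<dots> \<le> 1 + 1"
    using assms by (intro add_mono) (auto simp: norm_power power_le_one)
  finally show ?thesis by simp
qed

lemma norm_power_omega_diff_minus_power_card_le:
  fixes N D Q :: nat and z :: "'a::real_normed_div_algebra" and E :: "(nat \<times> nat) set"
  assumes "N > 0" "D dvd N" "norm z \<le> 1" "finite E"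
    and large: "\<And>q k. prime q \<Longrightarrow> 1 \<le> k \<Longrightarrow> \<not> q ^ k dvd Q \<Longrightarrow> q ^ k dvd N \<Longrightarrow> (q, k) \<in> E"
  shows "norm (z ^ (omega N - omega D) - z ^ card {q \<in> prime_factors N.
            q ^ multiplicity q N dvd N div D \<and> q ^ multiplicity q N dvd Q})
       \<le> 2 * (\<Sum>(q, k)\<in>E. of_bool (q ^ k dvd N div D \<and> q ^ k dvd N \<and> \<not> q ^ (k + 1) dvd N))"
    (is "?lhs \<le> 2 * (\<Sum>(q, k)\<in>E. ?R q k)")
proof -
  let ?T = "{q \<in> prime_factors N. q ^ multiplicity q N dvd N div D}"
  have nonneg: "0 \<le> (\<Sum>(q, k)\<in>E. ?R q k)"
    by (intro sum_nonneg) (simp add: case_prod_beta)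
  show ?thesis
  proof (cases "\<forall>q\<in>?T. q ^ multiplicity q N dvd Q")
    case True
    then have "{q \<in> prime_factors N.
        q ^ multiplicity q N dvd N div D \<and> q ^ multiplicity q N dvd Q} = ?T"
      by auto
    then show ?thesis
      using nonneg by (simp add: omega_diff_eq_card[OF assms(1,2)])
  next
    case False
    then obtain q where q: "q \<in> ?T" "\<not> q ^ multiplicity q N dvd Q" by blast
    define k where "k = multiplicity q N"
    have "prime q" "q dvd N" using q(1) by auto
    then have "1 \<le> k"
      using assms(1) prime_multiplicity_gt_zero_iff[of q N] by (simp add: k_def)
    have "\<not> q ^ (k + 1) dvd N"
      using power_dvd_iff_le_multiplicity[of N q "k + 1"] assms(1) prime_gt_1_nat[OF \<open>prime q\<close>]
      by (simp add: k_def)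
    then have "?R q k = 1"
      using q(1) by (simp add: k_def multiplicity_dvd)
    moreover have "(q, k) \<in> E"
      using large[OF \<open>prime q\<close> \<open>1 \<le> k\<close>] q by (simp add: k_def multiplicity_dvd)
    moreover have "(case (q, k) of (q, k) \<Rightarrow> ?R q k) \<le> (\<Sum>(q, k)\<in>E. ?R q k)"
      using \<open>(q, k) \<in> E\<close> assms(4) by (intro member_le_sum) (auto split: prod.splits)
    ultimately have "1 \<le> (\<Sum>(q, k)\<in>E. ?R q k)" by simp
    then show ?thesis
      using norm_power_diff_le_2[OF assms(3)] by (smt (verit))
  qed
qed

lemma sum_divisors_moebius_card_eq_sum_power_card:
  fixes P :: "'p set" and N D :: "'p \<Rightarrow> nat" and Q :: nat and w :: "'a::comm_ring_1"
  assumes "finite P" "Q > 0" "\<And>p. p \<in> P \<Longrightarrow> 0 < N p \<and> D p dvd N p"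
  shows "(\<Sum>l\<in>{l. l dvd Q}. w ^ omega l * (\<Sum>m\<in>{m. m dvd l}. of_int (moebius m) *
            of_nat (card {p \<in> P. l dvd N p div D p \<and> m * l dvd N p})))
       = (\<Sum>p\<in>P. (w + 1) ^ card {q \<in> prime_factors (N p).
            q ^ multiplicity q (N p) dvd N p div D p \<and> q ^ multiplicity q (N p) dvd Q})"
proof -
  let ?L = "{l. l dvd Q}" and ?M = "\<lambda>l. {m. m dvd l}"
  let ?f = "\<lambda>l m p. w ^ omega l * (of_int (moebius m) * of_bool (l dvd N p div D p \<and> m * l dvd N p))"
  have card_eq: "of_nat (card {p \<in> P. \<phi> p}) = (\<Sum>p\<in>P. of_bool (\<phi> p) :: 'a)" for \<phi>
    using assms(1) by (simp add: Collect_conj_eq Int_commute)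
  have "(\<Sum>l\<in>?L. w ^ omega l * (\<Sum>m\<in>?M l. of_int (moebius m) *
            of_nat (card {p \<in> P. l dvd N p div D p \<and> m * l dvd N p})))
      = (\<Sum>l\<in>?L. \<Sum>m\<in>?M l. \<Sum>p\<in>P. ?f l m p)"
    by (simp add: card_eq sum_distrib_left)
  also have "\<dots> = (\<Sum>l\<in>?L. \<Sum>p\<in>P. \<Sum>m\<in>?M l. ?f l m p)"
    by (intro sum.cong refl sum.swap)
  also have "\<dots> = (\<Sum>p\<in>P. \<Sum>l\<in>?L. \<Sum>m\<in>?M l. ?f l m p)"
    by (rule sum.swap)
  also have "\<dots> = (\<Sum>p\<in>P. (w + 1) ^ card {q \<in> prime_factors (N p).
            q ^ multiplicity q (N p) dvd N p div D p \<and> q ^ multiplicity q (N p) dvd Q})"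
    using assms(2,3) by (simp add: sum_distrib_left[symmetric] sum_divisors_moebius_eq_power_card)
  finally show ?thesis .
qed

lemma norm_sum_power_omega_diff_minus_sum_le:
  fixes P :: "'p set" and N D :: "'p \<Rightarrow> nat" and Q :: nat and E :: "(nat \<times> nat) set"
    and z :: "'a::real_normed_div_algebra"
  assumes "finite P" "finite E" "\<And>p. p \<in> P \<Longrightarrow> 0 < N p \<and> D p dvd N p" "norm z \<le> 1"
    and large: "\<And>p q k. p \<in> P \<Longrightarrow> prime q \<Longrightarrow> 1 \<le> k \<Longrightarrow> \<not> q ^ k dvd Q \<Longrightarrow> q ^ k dvd N p
      \<Longrightarrow> (q, k) \<in> E"
  shows "norm ((\<Sum>p\<in>P. z ^ (omega (N p) - omega (D p))) -
            (\<Sum>p\<in>P. z ^ card {q \<in> prime_factors (N p).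
              q ^ multiplicity q (N p) dvd N p div D p \<and> q ^ multiplicity q (N p) dvd Q}))
       \<le> 2 * (\<Sum>(q, k)\<in>E. real (card {p \<in> P.
              q ^ k dvd N p div D p \<and> q ^ k dvd N p \<and> \<not> q ^ (k + 1) dvd N p}))"
proof -
  let ?R = "\<lambda>p q k. q ^ k dvd N p div D p \<and> q ^ k dvd N p \<and> \<not> q ^ (k + 1) dvd N p"
  let ?T = "\<lambda>p. {q \<in> prime_factors (N p).
              q ^ multiplicity q (N p) dvd N p div D p \<and> q ^ multiplicity q (N p) dvd Q}"
  have "norm ((\<Sum>p\<in>P. z ^ (omega (N p) - omega (D p))) - (\<Sum>p\<in>P. z ^ card (?T p)))
      \<le> (\<Sum>p\<in>P. norm (z ^ (omega (N p) - omega (D p)) - z ^ card (?T p)))"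
    unfolding sum_subtractf[symmetric] by (rule norm_sum)
  also have "\<dots> \<le> (\<Sum>p\<in>P. 2 * (\<Sum>(q, k)\<in>E. of_bool (?R p q k)))"
    using assms(2-4) large
    by (intro sum_mono norm_power_omega_diff_minus_power_card_le) auto
  also have "\<dots> = 2 * (\<Sum>(q, k)\<in>E. \<Sum>p\<in>P. of_bool (?R p q k))"
    by (simp add: sum_distrib_left[symmetric] sum.swap[of _ E P] case_prod_beta)
  also have "\<dots> = 2 * (\<Sum>(q, k)\<in>E. real (card {p \<in> P. ?R p q k}))"
    using assms(1) by (simp add: Collect_conj_eq Int_commute case_prod_beta)
  finally show ?thesis .
qed

(* The proposition for an arbitrary finite family of pairs D p dvd N p; it is applied with
   N p = p - 1 and D p = ord_p(a). *)
lemma norm_sum_power_omega_diff_minus_moebius_sum_le: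
  fixes P :: "'p set" and N D :: "'p \<Rightarrow> nat" and Q :: nat and E :: "(nat \<times> nat) set"
    and z :: "'a::{real_normed_div_algebra, comm_ring_1}"
  assumes "finite P" "finite E" "Q > 0" "\<And>p. p \<in> P \<Longrightarrow> 0 < N p \<and> D p dvd N p" "norm z \<le> 1"
    and "\<And>p q k. p \<in> P \<Longrightarrow> prime q \<Longrightarrow> 1 \<le> k \<Longrightarrow> \<not> q ^ k dvd Q \<Longrightarrow> q ^ k dvd N p
      \<Longrightarrow> (q, k) \<in> E"
  shows "norm ((\<Sum>p\<in>P. z ^ (omega (N p) - omega (D p))) -
            (\<Sum>l\<in>{l. l dvd Q}. (z - 1) ^ omega l * (\<Sum>m\<in>{m. m dvd l}. of_int (moebius m) *
              of_nat (card {p \<in> P. l dvd N p div D p \<and> m * l dvd N p}))))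
       \<le> 2 * (\<Sum>(q, k)\<in>E. real (card {p \<in> P.
              q ^ k dvd N p div D p \<and> q ^ k dvd N p \<and> \<not> q ^ (k + 1) dvd N p}))"
  using sum_divisors_moebius_card_eq_sum_power_card[OF assms(1,3,4), where w = "z - 1"]
    norm_sum_power_omega_diff_minus_sum_le[OF assms(1,2,4,5,6)]
  by simp

lemma fermat_theorem_int:
  fixes n :: int
  assumes "prime p" "\<not> int p dvd n"
  shows "[n ^ (p - 1) = 1] (mod int p)"
proof -
  have "prime (int p)" using assms(1) by simp
  then have "coprime n (int p)"
    using prime_imp_coprime assms(2) by (metis coprime_commute)
  then show ?thesis
    using residues.euler_theorem[of "int p" n] prime_gt_1_nat[OF assms(1)] totient_prime[OF assms(1)]
    by (simp add: residues_def)
qed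

lemma Least_power_cong_dvd:
  fixes n d m :: "'a::{unique_euclidean_ring, ring_gcd}"
  assumes "coprime d m" "0 < k" "[n ^ k = d ^ k] (mod m)"
  shows "(LEAST j. 0 < j \<and> [n ^ j = d ^ j] (mod m)) dvd k"
proof -
  define o' where "o' = (LEAST j. 0 < j \<and> [n ^ j = d ^ j] (mod m))"
  have "0 < o'" and o'_cong: "[n ^ o' = d ^ o'] (mod m)"
    using LeastI[of "\<lambda>j. 0 < j \<and> [n ^ j = d ^ j] (mod m)", OF conjI[OF assms(2,3)]]
    by (simp_all add: o'_def)
  define t r where "t = k div o'" and "r = k mod o'"
  have k_eq: "k = o' * t + r" by (simp add: t_def r_def)
  have "[(d ^ o') ^ t * n ^ r = n ^ k] (mod m)"
    unfolding k_eq power_add power_mult by (intro cong_mult cong_pow cong_sym[OF o'_cong] cong_refl)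
  also have "[n ^ k = (d ^ o') ^ t * d ^ r] (mod m)"
    using assms(3) unfolding k_eq power_add power_mult .
  finally have "[n ^ r = d ^ r] (mod m)"
    using assms(1) by (simp add: cong_mult_lcancel)
  moreover have "r < o'" using \<open>0 < o'\<close> by (simp add: r_def)
  ultimately have "r = 0"
    using not_less_Least[of r "\<lambda>j. 0 < j \<and> [n ^ j = d ^ j] (mod m)"] by (auto simp: o'_def)
  then show ?thesis by (simp add: o'_def [symmetric] r_def dvd_eq_mod_eq_0)
qed

lemma rat_vp_eq_0_not_dvd:
  assumes "a \<noteq> 0" "prime p" "rat_vp p a = 0" "quotient_of a = (n, d)"
  shows "\<not> int p dvd n" "\<not> int p dvd d"
proof -
  have "coprime n d" "d > 0"
    using assms(4) quotient_of_coprime quotient_of_denom_pos by auto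
  have "n \<noteq> 0"
    using quotient_of_div[OF assms(4)] assms(1) by auto
  have "prime (int p)" using assms(2) by simp
  have "multiplicity (int p) n = multiplicity (int p) d"
    using assms(3,4) by (simp add: rat_vp_def)
  then have "int p dvd n \<longleftrightarrow> int p dvd d"
    using prime_multiplicity_gt_zero_iff[of "int p" n] prime_multiplicity_gt_zero_iff[of "int p" d]
      \<open>prime (int p)\<close> \<open>d > 0\<close> \<open>n \<noteq> 0\<close>
    by simp
  moreover have "\<not> (int p dvd n \<and> int p dvd d)"
    using \<open>coprime n d\<close> \<open>prime (int p)\<close> by (meson coprime_common_divisor not_prime_unit)
  ultimately show "\<not> int p dvd n" "\<not> int p dvd d" by blast+
qed

lemma rat_ord_pos_dvd:
  assumes "a \<noteq> 0" "prime p" "rat_vp p a = 0"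
  shows "0 < rat_ord p a" "rat_ord p a dvd p - 1"
proof -
  obtain n d where nd: "quotient_of a = (n, d)" by (cases "quotient_of a")
  note not_dvd = rat_vp_eq_0_not_dvd[OF assms nd]
  have "[n ^ (p - 1) = d ^ (p - 1)] (mod int p)"
    using fermat_theorem_int[OF assms(2)] not_dvd by (meson cong_sym cong_trans)
  moreover have "prime (int p)" using assms(2) by simp
  then have "coprime d (int p)"
    using prime_imp_coprime not_dvd(2) by (metis coprime_commute)
  moreover have "0 < p - 1" using prime_gt_1_nat[OF assms(2)] by simp
  ultimately have "(LEAST j. 0 < j \<and> [n ^ j = d ^ j] (mod int p)) dvd p - 1"
    by (intro Least_power_cong_dvd)
  then have "rat_ord p a dvd p - 1"
    by (simp add: rat_ord_def nd)
  then show "rat_ord p a dvd p - 1" "0 < rat_ord p a"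
    using \<open>0 < p - 1\<close> by (auto intro: Nat.gr0I)
qed

lemma Qxi_pos: "0 < Qxi \<xi>"
proof -
  have "Lcm {1..nat \<lfloor>\<xi>\<rfloor>} \<noteq> (0 :: nat)" by (simp add: Lcm_0_iff_nat)
  then show ?thesis unfolding Qxi_def by (simp only: neq0_conv)
qed

lemma dvd_Qxi:
  assumes "0 < n" "real n \<le> \<xi>"
  shows "n dvd Qxi \<xi>"
  unfolding Qxi_def using assms by (intro dvd_Lcm) (auto intro: le_nat_floor)

lemma finite_prime_power_pairs_le: "finite {(q :: nat, k :: nat). prime q \<and> 1 \<le> k \<and> q ^ k \<le> n}"
proof -
  have "q \<le> n \<and> k \<le> n" if "prime q" "1 \<le> k" "q ^ k \<le> n" for q k
  proof -
    have "2 \<le> q" using that(1) by (simp add: prime_ge_2_nat)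
    then have "q \<le> q ^ k" "2 ^ k \<le> q ^ k"
      using that(2) by (simp_all add: self_le_power power_mono)
    moreover have "k < 2 ^ k" by (rule less_exp)
    ultimately show ?thesis using that(3) by (intro conjI; linarith)
  qed
  then have "{(q, k). prime q \<and> 1 \<le> k \<and> q ^ k \<le> n} \<subseteq> {..n} \<times> {..n}" by auto
  then show ?thesis by (rule finite_subset) simp
qed

theorem proposition2p6:
  "\<exists>C::real. \<forall>(a::rat) (z::complex) (\<xi>::real) (x::real).
     a \<notin> {-1, 0, 1} \<and> cmod z \<le> 1 \<and> 0 < \<xi> \<and> \<xi> < x \<longrightarrow>
     cmod ((\<Sum>p\<in>{p::nat. prime p \<and> real p \<le> x \<and> rat_vp p a = 0}.
               z ^ (omega (p - 1) - omega (rat_ord p a)))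
           - (\<Sum>l\<in>{l::nat. l dvd Qxi \<xi>}. (z - 1) ^ omega l *
               (\<Sum>m\<in>{m::nat. m dvd l}. of_int (moebius m) *
                  of_nat (card {p::nat. prime p \<and> real p \<le> x \<and> rat_vp p a = 0 \<and>
                                 l dvd (p - 1) div rat_ord p a \<and> m * l dvd (p - 1)}))))
     \<le> C * (\<Sum>(q, k)\<in>{(q::nat, k::nat). prime q \<and> 1 \<le> k \<and> \<xi> < real (q ^ k) \<and> real (q ^ k) \<le> x}.
               real (card {p::nat. prime p \<and> real p \<le> x \<and> rat_vp p a = 0 \<and>
                                 q ^ k dvd (p - 1) div rat_ord p a \<and>
                                 q ^ k dvd (p - 1) \<and> \<not> q ^ (k + 1) dvd (p - 1)}))"
proof (intro exI[of _ 2] allI impI, goal_cases)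
  case (1 a z \<xi> x)
  then have "a \<noteq> 0" "cmod z \<le> 1" by auto
  define P where "P = {p::nat. prime p \<and> real p \<le> x \<and> rat_vp p a = 0}"
  define E where "E = {(q::nat, k::nat). prime q \<and> 1 \<le> k \<and> \<xi> < real (q ^ k) \<and> real (q ^ k) \<le> x}"
  have "finite P"
    unfolding P_def by (rule finite_subset[of _ "{..nat \<lfloor>x\<rfloor>}"]) (auto intro: le_nat_floor)
  have "finite E"
    unfolding E_def
    by (rule finite_subset[OF _ finite_prime_power_pairs_le[of "nat \<lfloor>x\<rfloor>"]]) (auto intro: le_nat_floor)
  have P_facts: "0 < p - 1 \<and> rat_ord p a dvd p - 1" if "p \<in> P" for p
    using that rat_ord_pos_dvd[OF \<open>a \<noteq> 0\<close>] prime_gt_1_nat by (auto simp: P_def)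
  have large: "(q, k) \<in> E"
    if "p \<in> P" "prime q" "1 \<le> k" "\<not> q ^ k dvd Qxi \<xi>" "q ^ k dvd p - 1" for p q k
  proof -
    have "0 < q ^ k" using prime_gt_0_nat[OF that(2)] by simp
    then have "\<xi> < real (q ^ k)"
      using that(4) dvd_Qxi[of "q ^ k" \<xi>] by linarith
    moreover have "q ^ k \<le> p - 1"
      using that(5) P_facts[OF that(1)] by (simp add: dvd_imp_le)
    then have "real (q ^ k) < real p"
      using P_facts[OF that(1)] by (simp only: of_nat_less_iff) linarith
    then have "real (q ^ k) \<le> x"
      using that(1) unfolding P_def by (simp only: mem_Collect_eq) linarith
    ultimately show ?thesis using that(2,3) by (simp add: E_def)
  qed
  have P_eq: "{p. prime p \<and> real p \<le> x \<and> rat_vp p a = 0 \<and> \<phi> p} = {p \<in> P. \<phi> p}" for \<phi>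
    by (auto simp: P_def)
  show ?case
    unfolding P_eq P_def[symmetric] E_def[symmetric]
    by (rule norm_sum_power_omega_diff_minus_moebius_sum_le)
      (use P_facts large in \<open>simp_all add: Qxi_pos \<open>finite P\<close> \<open>finite E\<close> \<open>cmod z \<le> 1\<close>\<close>)
qed

end
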